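(* Let $\sigma$ be a nonnegative finite measure on $\mathbb{R}^2$ which is upper $\alpha$-Ahlfors regular for some $\alpha>1$ and constants $M,r_*>0$, with $\sigma(\mathbb{R}^2)=\Phi\le Mr_*^\alpha$. Then $$\|\sigma\|^2_{H^{-1/2}(\mathbb{R}^2)}\lesssim_\alpha M^{1/\alpha}\Phi^{2-1/\alpha}.$$
   Context: For $\alpha\in[0,2]$, a nonnegative finite measure $\sigma$ on $\mathbb{R}^2$ is upper $\alpha$-Ahlfors regular with constants $M,r_*>0$ if $\sigma(B(x,r))\le Mr^\alpha$ for all $x\in\operatorname{supp}\sigma$ and all $r\in(0,r_*]$. $\|\sigma\|^2_{H^{-1/2}(\mathbb{R}^2)}=\int\int|x-y|^{-1}d\sigma(x)d\sigma(y)$. $A\lesssim_\alpha B$ means $A\le CB$ with $C$ depending only on $\alpha$. *)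

theory Defs
  imports "HOL-Analysis.Analysis" "HOL-Probability.Probability"
begin

definition msupp :: "(real^2) measure \<Rightarrow> (real^2) set" where
  "msupp \<sigma> = {x. \<forall>r>0. emeasure \<sigma> (ball x r) > 0}"

definition upper_ahlfors_regular ::
  "real \<Rightarrow> real \<Rightarrow> real \<Rightarrow> (real^2) measure \<Rightarrow> bool" where
  "upper_ahlfors_regular \<alpha> M rs \<sigma> \<longleftrightarrow>
     (\<forall>x\<in>msupp \<sigma>. \<forall>r. 0 < r \<and> r \<le> rs \<longrightarrow> measure \<sigma> (ball x r) \<le> M * r powr \<alpha>)"

definition riesz_kernel :: "real^2 \<Rightarrow> real^2 \<Rightarrow> ennreal" where
  "riesz_kernel x y = (if x = y then \<infinity> else ennreal (1 / dist x y))"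

text \<open>The squared H^{-1/2}(R^2) norm: double integral of |x-y|^{-1} (possibly infinite).\<close>
definition Hm12_norm_sq :: "(real^2) measure \<Rightarrow> ennreal" where
  "Hm12_norm_sq \<sigma> = (\<integral>\<^sup>+ x. (\<integral>\<^sup>+ y. riesz_kernel x y \<partial>\<sigma>) \<partial>\<sigma>)"

end

theory Submission
  imports Defs
begin

(*
  By the layer-cake formula, the potential of sigma at x equals the integral over t > 0 of
  sigma(B(x, 1/t)).  Bound the integrand by the total mass Phi for t <= t0 and, by upper
  Ahlfors regularity, by M t^(-alpha) for t >= t0 >= 1/r_*; this gives
  Phi t0 + M t0^(1-alpha) / (alpha - 1).  The choice t0 = (M/Phi)^(1/alpha), where the two
  bounds meet, is admissible because Phi <= M r_*^alpha, and yields
  alpha/(alpha-1) M^(1/alpha) Phi^(1-1/alpha) at every point of the support, hence sigma-almost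
  everywhere.  Integrating once more against sigma gives the claim with C = alpha/(alpha-1).
*)

lemma emeasure_lborel_greaterThan: "emeasure lborel {a::real<..} = \<infinity>"
proof (rule ccontr)
  assume "emeasure lborel {a<..} \<noteq> \<infinity>"
  then obtain r where r: "emeasure lborel {a<..} = ennreal r" "r \<ge> 0"
    by (cases "emeasure lborel {a<..}") auto
  have "ennreal (r + 1) = emeasure lborel {a<..<a + r + 1}"
    using r by simp
  also have "\<dots> \<le> emeasure lborel {a<..}"
    by (rule emeasure_mono) auto
  finally show False
    using r by simp
qed

lemma nn_integral_powr_tail:
  fixes \<alpha> t0 :: real
  assumes "\<alpha> > 1" "t0 > 0"
  shows "(\<integral>\<^sup>+ t\<in>{t0..}. ennreal (t powr -\<alpha>) \<partial>lborel) = ennreal (t0 powr (1 - \<alpha>) / (\<alpha> - 1))"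
proof (rule nn_integral_has_integral_lebesgue')
  have "((\<lambda>t. t powr -\<alpha>) has_integral -(t0 powr (-\<alpha> + 1)) / (-\<alpha> + 1)) {t0..}"
    using assms by (intro has_integral_powr_to_inf) auto
  then show "((\<lambda>t. t powr -\<alpha>) has_integral t0 powr (1 - \<alpha>) / (\<alpha> - 1)) {t0..}"
    by (simp add: minus_divide_right)
qed simp

lemma two_piece_bound_at_balance_point:
  fixes \<alpha> M P t0 :: real
  assumes "\<alpha> > 1" "M > 0" "P > 0" "t0 = (M / P) powr (1 / \<alpha>)"
  shows "P * t0 + M * (t0 powr (1 - \<alpha>) / (\<alpha> - 1))
    = \<alpha> / (\<alpha> - 1) * M powr (1 / \<alpha>) * P powr (1 - 1 / \<alpha>)"
proof -
  have "t0 > 0" "t0 powr \<alpha> = M / P"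
    using assms by (simp_all add: powr_powr)
  then have balance: "M * t0 powr (1 - \<alpha>) = P * t0"
    using assms by (simp add: powr_diff field_simps)
  have "P * t0 = P powr 1 * (M powr (1 / \<alpha>) / P powr (1 / \<alpha>))"
    using assms by (simp add: powr_divide)
  also have "\<dots> = M powr (1 / \<alpha>) * P powr (1 - 1 / \<alpha>)"
    by (simp add: powr_diff)
  finally show ?thesis
    using balance assms by (simp add: field_simps)
qed

lemma AE_in_msupp:
  fixes \<sigma> :: "(real^2) measure"
  assumes sets: "sets \<sigma> = sets borel"
  shows "AE x in \<sigma>. x \<in> msupp \<sigma>"
proof -
  define F where "F = {ball x r | x r. r > 0 \<and> emeasure \<sigma> (ball x r) = 0}"
  have "open S" if "S \<in> F" for S
    using that by (auto simp: F_def)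
  then obtain F' where F': "F' \<subseteq> F" "countable F'" "\<Union>F' = \<Union>F"
    by (rule Lindelof)
  have "(\<Union>S\<in>F'. S) \<in> null_sets \<sigma>"
  proof (rule null_sets_UN'[OF \<open>countable F'\<close>])
    show "S \<in> null_sets \<sigma>" if "S \<in> F'" for S
      using that F'(1) sets by (auto simp: F_def null_sets_def)
  qed
  then have "\<Union>F' \<in> null_sets \<sigma>"
    by simp
  moreover have "{x \<in> space \<sigma>. x \<notin> msupp \<sigma>} \<subseteq> \<Union>F'"
  proof (rule subsetI)
    fix x
    assume "x \<in> {x \<in> space \<sigma>. x \<notin> msupp \<sigma>}"
    then obtain r where "r > 0" "\<not> emeasure \<sigma> (ball x r) > 0"
      unfolding msupp_def by blast
    then have "ball x r \<in> F"
      unfolding F_def by (auto simp: not_less)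
    then have "x \<in> \<Union>F"
      using \<open>r > 0\<close> by (meson UnionI centre_in_ball)
    then show "x \<in> \<Union>F'"
      using F'(3) by simp
  qed
  ultimately show ?thesis
    by (rule AE_I')
qed

definition riesz_potential :: "(real^2) measure \<Rightarrow> real^2 \<Rightarrow> ennreal" where
  "riesz_potential \<sigma> x = (\<integral>\<^sup>+ y. riesz_kernel x y \<partial>\<sigma>)"

lemma riesz_kernel_layer_cake:
  "riesz_kernel x y = (\<integral>\<^sup>+ t\<in>{0<..}. indicator (ball x (1 / t)) y \<partial>lborel)"
proof (cases "x = y")
  case True
  then have "indicator (ball x (1 / t)) y * indicator {0<..} t = (indicator {0<..} t :: ennreal)"
    for t :: real
    by (simp add: indicator_def)
  then show ?thesis
    using True by (simp add: riesz_kernel_def emeasure_lborel_greaterThan)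
next
  case False
  then have "indicator (ball x (1 / t)) y * indicator {0<..} t
      = (indicator {0<..<1 / dist x y} t :: ennreal)" for t :: real
    by (auto simp: indicator_def field_simps dist_commute)
  then show ?thesis
    using False by (simp add: riesz_kernel_def)
qed

lemma riesz_potential_layer_cake:
  assumes "sigma_finite_measure \<sigma>" and sets: "sets \<sigma> = sets borel"
  shows "riesz_potential \<sigma> x = (\<integral>\<^sup>+ t\<in>{0<..}. emeasure \<sigma> (ball x (1 / t)) \<partial>lborel)"
proof -
  interpret pair_sigma_finite \<sigma> lborel
    using assms by (simp add: pair_sigma_finite_def lborel.sigma_finite_measure_axioms)
  note sets[measurable_cong]
  have "(\<lambda>(y, t). indicator (ball x (1 / t)) y * indicator {0<..} t :: ennreal)
      \<in> borel_measurable (\<sigma> \<Otimes>\<^sub>M lborel)"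
    unfolding indicator_def mem_ball by measurable
  then have "(\<integral>\<^sup>+ y. (\<integral>\<^sup>+ t\<in>{0<..}. indicator (ball x (1 / t)) y \<partial>lborel) \<partial>\<sigma>)
      = (\<integral>\<^sup>+ t. (\<integral>\<^sup>+ y. indicator (ball x (1 / t)) y * indicator {0<..} t \<partial>\<sigma>) \<partial>lborel)"
    by (rule Fubini'[symmetric])
  moreover have "(\<integral>\<^sup>+ y. indicator (ball x (1 / t)) y * indicator {0<..} t \<partial>\<sigma>)
      = emeasure \<sigma> (ball x (1 / t)) * indicator {0<..} t" for t :: real
    using sets nn_integral_cmult_indicator[of "ball x (1 / t)" \<sigma> "indicator {0<..} t"]
    by (simp add: mult.commute)
  ultimately show ?thesis
    by (simp add: riesz_potential_def riesz_kernel_layer_cake)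
qed

lemma riesz_potential_le_split_bound:
  fixes \<sigma> :: "(real^2) measure"
  assumes sets: "sets \<sigma> = sets borel" and "finite_measure \<sigma>" and "\<alpha> > 1" "M \<ge> 0"
    and ahlfors: "upper_ahlfors_regular \<alpha> M rs \<sigma>" and x: "x \<in> msupp \<sigma>"
    and "t0 > 0" "1 / t0 \<le> rs"
  shows "riesz_potential \<sigma> x \<le> ennreal (measure \<sigma> UNIV * t0 + M * (t0 powr (1 - \<alpha>) / (\<alpha> - 1)))"
proof -
  interpret finite_measure \<sigma> by fact
  define P where "P = measure \<sigma> UNIV"
  define tail where "tail = t0 powr (1 - \<alpha>) / (\<alpha> - 1)"
  have "tail \<ge> 0"
    using assms by (simp add: tail_def)
  have space: "space \<sigma> = UNIV"
    using sets_eq_imp_space_eq[OF sets] by simp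
  have ball_bound: "emeasure \<sigma> (ball x (1 / t)) * indicator {0<..} t
      \<le> ennreal P * indicator {0..t0} t + ennreal M * (ennreal (t powr -\<alpha>) * indicator {t0..} t)"
    for t :: real
  proof -
    consider "t \<le> 0" | "0 < t" "t \<le> t0" | "t0 < t"
      by linarith
    then show ?thesis
    proof cases
      case 2
      have "emeasure \<sigma> (ball x (1 / t)) \<le> emeasure \<sigma> (space \<sigma>)"
        by (rule emeasure_space)
      then show ?thesis
        using 2 by (simp add: P_def space emeasure_eq_measure add_increasing2)
    next
      case 3
      then have "1 / t \<le> rs"
        using \<open>t0 > 0\<close> \<open>1 / t0 \<le> rs\<close> frac_le[of 1 1 t0 t] by linarith
      then have "measure \<sigma> (ball x (1 / t)) \<le> M * (1 / t) powr \<alpha>"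
        using ahlfors x 3 \<open>t0 > 0\<close> unfolding upper_ahlfors_regular_def by simp
      also have "\<dots> = M * t powr -\<alpha>"
        using 3 \<open>t0 > 0\<close> by (simp add: powr_divide powr_minus_divide)
      finally show ?thesis
        using 3 \<open>t0 > 0\<close> \<open>M \<ge> 0\<close>
        by (simp add: emeasure_eq_measure ennreal_mult[symmetric] ennreal_leI add_increasing)
    qed simp
  qed
  have "riesz_potential \<sigma> x
      \<le> (\<integral>\<^sup>+ t. ennreal P * indicator {0..t0} t + ennreal M * (ennreal (t powr -\<alpha>) * indicator {t0..} t) \<partial>lborel)"
    unfolding riesz_potential_layer_cake[OF sigma_finite_measure_axioms sets]
    by (intro nn_integral_mono ball_bound)
  also have "\<dots> = ennreal P * ennreal t0 + ennreal M * ennreal tail"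
    using assms by (simp add: nn_integral_add nn_integral_cmult nn_integral_powr_tail tail_def)
  also have "\<dots> = ennreal (P * t0 + M * tail)"
    using assms \<open>tail \<ge> 0\<close> by (simp add: P_def ennreal_mult)
  finally show ?thesis
    unfolding P_def tail_def .
qed

lemma riesz_potential_le:
  fixes \<sigma> :: "(real^2) measure"
  assumes sets: "sets \<sigma> = sets borel" and "finite_measure \<sigma>" and \<alpha>: "\<alpha> > 1" and M: "M > 0"
    and "rs > 0" "upper_ahlfors_regular \<alpha> M rs \<sigma>" "x \<in> msupp \<sigma>"
    and "measure \<sigma> UNIV \<le> M * rs powr \<alpha>"
  shows "riesz_potential \<sigma> x
    \<le> ennreal (\<alpha> / (\<alpha> - 1) * M powr (1 / \<alpha>) * measure \<sigma> UNIV powr (1 - 1 / \<alpha>))"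
proof -
  interpret finite_measure \<sigma> by fact
  define P where "P = measure \<sigma> UNIV"
  have "0 < emeasure \<sigma> (ball x 1)"
    using \<open>x \<in> msupp \<sigma>\<close> by (simp add: msupp_def)
  also have "\<dots> \<le> ennreal P"
    using emeasure_space[of \<sigma> "ball x 1"] sets_eq_imp_space_eq[OF sets]
    by (simp add: P_def emeasure_eq_measure)
  finally have "P > 0"
    by simp
  define t0 where "t0 = (M / P) powr (1 / \<alpha>)"
  have "t0 > 0"
    using \<open>M > 0\<close> \<open>P > 0\<close> by (simp add: t0_def)
  have "1 / t0 = (P / M) powr (1 / \<alpha>)"
    by (simp add: t0_def powr_divide)
  also have "\<dots> \<le> (rs powr \<alpha>) powr (1 / \<alpha>)"
    using assms \<open>P > 0\<close> by (intro powr_mono2) (auto simp: P_def pos_divide_le_eq mult.commute)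
  also have "\<dots> = rs"
    using assms by (simp add: powr_powr)
  finally have "1 / t0 \<le> rs" .
  have "riesz_potential \<sigma> x \<le> ennreal (P * t0 + M * (t0 powr (1 - \<alpha>) / (\<alpha> - 1)))"
    unfolding P_def using assms \<open>t0 > 0\<close> \<open>1 / t0 \<le> rs\<close>
    by (intro riesz_potential_le_split_bound) auto
  also have "P * t0 + M * (t0 powr (1 - \<alpha>) / (\<alpha> - 1))
      = \<alpha> / (\<alpha> - 1) * M powr (1 / \<alpha>) * P powr (1 - 1 / \<alpha>)"
    by (rule two_piece_bound_at_balance_point[OF \<alpha> M \<open>P > 0\<close> t0_def])
  finally show ?thesis
    unfolding P_def .
qed

lemma Hm12_norm_sq_le_of_riesz_potential_le:
  fixes \<sigma> :: "(real^2) measure"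
  assumes sets: "sets \<sigma> = sets borel" and "finite_measure \<sigma>" and "K \<ge> 0"
    and potential_le: "\<And>x. x \<in> msupp \<sigma> \<Longrightarrow> riesz_potential \<sigma> x \<le> ennreal K"
  shows "Hm12_norm_sq \<sigma> \<le> ennreal (K * measure \<sigma> UNIV)"
proof -
  interpret finite_measure \<sigma> by fact
  have "Hm12_norm_sq \<sigma> = (\<integral>\<^sup>+ x. riesz_potential \<sigma> x \<partial>\<sigma>)"
    by (simp add: Hm12_norm_sq_def riesz_potential_def)
  also have "\<dots> \<le> (\<integral>\<^sup>+ x. ennreal K \<partial>\<sigma>)"
    using AE_in_msupp[OF sets] by (intro nn_integral_mono_AE) (auto elim: AE_mp intro: potential_le)
  also have "\<dots> = ennreal (K * measure \<sigma> UNIV)"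
    using \<open>K \<ge> 0\<close> sets_eq_imp_space_eq[OF sets] by (simp add: emeasure_eq_measure ennreal_mult)
  finally show ?thesis .
qed

theorem proposition4p7:
  fixes \<alpha> :: real
  assumes "\<alpha> > 1"
  shows "\<exists>C>0. \<forall>(\<sigma>::(real^2) measure) M rs.
           sets \<sigma> = sets borel \<longrightarrow> finite_measure \<sigma> \<longrightarrow>
           M > 0 \<longrightarrow> rs > 0 \<longrightarrow>
           upper_ahlfors_regular \<alpha> M rs \<sigma> \<longrightarrow>
           measure \<sigma> UNIV \<le> M * rs powr \<alpha> \<longrightarrow>
           Hm12_norm_sq \<sigma> \<le> ennreal (C * M powr (1 / \<alpha>) * measure \<sigma> UNIV powr (2 - 1 / \<alpha>))"
proof (intro exI[of _ "\<alpha> / (\<alpha> - 1)"] conjI allI impI)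
  show "\<alpha> / (\<alpha> - 1) > 0"
    using assms by simp
  fix \<sigma> :: "(real^2) measure" and M rs :: real
  assume hyps: "sets \<sigma> = sets borel" "finite_measure \<sigma>" "M > 0" "rs > 0"
    "upper_ahlfors_regular \<alpha> M rs \<sigma>" "measure \<sigma> UNIV \<le> M * rs powr \<alpha>"
  define P where "P = measure \<sigma> UNIV"
  have "P \<ge> 0"
    by (simp add: P_def)
  have "Hm12_norm_sq \<sigma> \<le> ennreal (\<alpha> / (\<alpha> - 1) * M powr (1 / \<alpha>) * P powr (1 - 1 / \<alpha>) * P)"
    unfolding P_def using assms hyps \<open>\<alpha> / (\<alpha> - 1) > 0\<close>
    by (intro Hm12_norm_sq_le_of_riesz_potential_le riesz_potential_le) simp_all
  also have "\<dots> = ennreal (\<alpha> / (\<alpha> - 1) * M powr (1 / \<alpha>) * P powr (2 - 1 / \<alpha>))"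
    using \<open>P \<ge> 0\<close> powr_add[of P "1 - 1 / \<alpha>" 1] by (simp add: mult.assoc)
  finally show "Hm12_norm_sq \<sigma> \<le> ennreal (\<alpha> / (\<alpha> - 1) * M powr (1 / \<alpha>) * P powr (2 - 1 / \<alpha>))" .
qed

end
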